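(* Let $H>0$, $R(1,1)>0$, and let $l:[0,\infty)\to\mathbb{R}$ satisfy $l(0)=1$ and not be identically zero on $(0,\infty)$. Let $X$ be a centered $H$-self-similar Gaussian process whose covariance function satisfies \[ R(s,t)=R(1,1)\,(s\wedge t)^{2H}\,l\!\left(\frac{|s-t|}{s\wedge t}\right),\qquad s,t>0. \] If $X$ is a Markov process, then there exists a (finite) $c\leq -H$ such that for every $\alpha\in(0,1)$, \[ l(t^{1-\alpha}-1)=t^{2H+c-\alpha(2H+c)},\qquad t\geq1. \]
   Context: A stochastic process $(X_t)_{t\geq0}$ is called $H$-self-similar with exponent $H>0$ if it is stochastically continuous at $0$ and, for every $a>0$, the process $(X_{at})_{t\geq0}$ has the same law as $(a^HX_t)_{t\geq0}$. *)

theory Defs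
  imports "HOL-Probability.Probability"
begin

text \<open>Processes are indexed by real time; only times t >= 0 are relevant.\<close>

definition gaussian_rv :: "'a measure \<Rightarrow> ('a \<Rightarrow> real) \<Rightarrow> bool" where
  "gaussian_rv M Y \<longleftrightarrow> Y \<in> borel_measurable M \<and>
     ((\<exists>\<mu> \<sigma>. \<sigma> > 0 \<and> distributed M lborel Y (normal_density \<mu> \<sigma>))
      \<or> (\<exists>c. AE \<omega> in M. Y \<omega> = c))"

text \<open>Gaussian process on [0,oo): every finite linear combination is Gaussian
  (equivalently all finite-dimensional distributions are multivariate normal).\<close>
definition gaussian_process :: "'a measure \<Rightarrow> (real \<Rightarrow> 'a \<Rightarrow> real) \<Rightarrow> bool" where
  "gaussian_process M X \<longleftrightarrow>
     (\<forall>t\<ge>0. X t \<in> borel_measurable M) \<and>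
     (\<forall>I a. finite I \<longrightarrow> I \<subseteq> {0..} \<longrightarrow> gaussian_rv M (\<lambda>\<omega>. \<Sum>i\<in>I. a i * X i \<omega>))"

definition centered_process :: "'a measure \<Rightarrow> (real \<Rightarrow> 'a \<Rightarrow> real) \<Rightarrow> bool" where
  "centered_process M X \<longleftrightarrow> (\<forall>t\<ge>0. integrable M (X t) \<and> integral\<^sup>L M (X t) = 0)"

definition process_law :: "'a measure \<Rightarrow> (real \<Rightarrow> 'a \<Rightarrow> real) \<Rightarrow> (real \<Rightarrow> real) measure" where
  "process_law M X = distr M (Pi\<^sub>M {0..} (\<lambda>_. borel)) (\<lambda>\<omega>. \<lambda>t\<in>{0..}. X t \<omega>)"

definition self_similar :: "'a measure \<Rightarrow> real \<Rightarrow> (real \<Rightarrow> 'a \<Rightarrow> real) \<Rightarrow> bool" where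
  "self_similar M H X \<longleftrightarrow> H > 0 \<and>
     (\<forall>\<epsilon>>0. ((\<lambda>t. measure M {\<omega>\<in>space M. \<bar>X t \<omega> - X 0 \<omega>\<bar> > \<epsilon>}) \<longlongrightarrow> 0) (at_right 0)) \<and>
     (\<forall>a>0. process_law M (\<lambda>t. X (a * t)) = process_law M (\<lambda>t \<omega>. a powr H * X t \<omega>))"

definition gen_sigma :: "'a measure \<Rightarrow> (real \<Rightarrow> 'a \<Rightarrow> real) \<Rightarrow> real set \<Rightarrow> 'a measure" where
  "gen_sigma M X I = sigma (space M) {X u -` B \<inter> space M | u B. u \<in> I \<and> B \<in> sets borel}"

definition markov_process :: "'a measure \<Rightarrow> (real \<Rightarrow> 'a \<Rightarrow> real) \<Rightarrow> bool" where
  "markov_process M X \<longleftrightarrow>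
     (\<forall>s t B. 0 \<le> s \<longrightarrow> s \<le> t \<longrightarrow> B \<in> sets borel \<longrightarrow>
        (AE \<omega> in M.
          real_cond_exp M (gen_sigma M X {0..s}) (indicator {\<omega>\<in>space M. X t \<omega> \<in> B}) \<omega>
          = real_cond_exp M (gen_sigma M X {s}) (indicator {\<omega>\<in>space M. X t \<omega> \<in> B}) \<omega>))"

end

theory Submission
  imports Defs
begin

text \<open>
  For a centred Gaussian process, the residual \<open>U = X\<^sub>s - b X\<^sub>u\<close> of the regression of \<open>X\<^sub>s\<close> on
  \<open>X\<^sub>u\<close> is uncorrelated with \<open>X\<^sub>u\<close>; comparing characteristic functions shows
  \<open>E[U 1\<^sub>B(X\<^sub>u)] = 0\<close> for every Borel set \<open>B\<close>, i.e. \<open>E[X\<^sub>s | X\<^sub>u] = b X\<^sub>u\<close>. For \<open>s \<le> u \<le> t\<close> the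
  Markov property lets \<open>X\<^sub>t\<close> see \<open>X\<^sub>s\<close> only through \<open>E[X\<^sub>s | X\<^sub>u]\<close>, so
  \<open>R(s,t) R(u,u) = R(s,u) R(u,t)\<close>. At the times \<open>1 \<le> a \<le> ab\<close> the assumed form of \<open>R\<close> turns this
  into multiplicativity of \<open>f(x) = l(x - 1)\<close> on \<open>[1, \<infinity>)\<close>, and Cauchy-Schwarz gives
  \<open>f(x)\<^sup>2 \<le> x\<^bsup>2H\<^esup>\<close>. Then \<open>ln f(e\<^sup>y)\<close> is additive and bounded above, hence linear, so
  \<open>f(x) = x\<^sup>d\<close> with \<open>d \<le> H\<close>, and \<open>c = d - 2H\<close> is the required constant. Self-similarity enters
  only through the assumed form of the covariance.
\<close>

lemma integrable_mult_of_square_integrable: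
  fixes f g :: "'a \<Rightarrow> real"
  assumes "integrable M (\<lambda>x. (f x)\<^sup>2)" "integrable M (\<lambda>x. (g x)\<^sup>2)"
    and [measurable]: "f \<in> borel_measurable M" "g \<in> borel_measurable M"
  shows "integrable M (\<lambda>x. f x * g x)"
proof (rule Bochner_Integration.integrable_bound[OF Bochner_Integration.integrable_add[OF assms(1,2)]])
  have "2 * \<bar>f x * g x\<bar> \<le> (f x)\<^sup>2 + (g x)\<^sup>2" for x
    using sum_squares_bound[of "\<bar>f x\<bar>" "\<bar>g x\<bar>"] by (simp add: abs_mult power2_eq_square)
  then show "AE x in M. norm (f x * g x) \<le> norm ((f x)\<^sup>2 + (g x)\<^sup>2)"
    by (intro AE_I2) (smt (verit) real_norm_def zero_le_power2)
qed simp

lemma integrable_mult_bounded: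
  fixes f g :: "'a \<Rightarrow> real"
  assumes "integrable M f" "g \<in> borel_measurable M" "AE \<omega> in M. \<bar>g \<omega>\<bar> \<le> 1"
  shows "integrable M (\<lambda>\<omega>. f \<omega> * g \<omega>)"
  using assms by (intro Bochner_Integration.integrable_bound[OF assms(1)])
    (auto elim!: eventually_mono simp: abs_mult intro: mult_left_le)

lemma Cauchy_Schwarz_integral:
  fixes f g :: "'a \<Rightarrow> real"
  assumes f2: "integrable M (\<lambda>x. (f x)\<^sup>2)" and g2: "integrable M (\<lambda>x. (g x)\<^sup>2)"
    and [measurable]: "f \<in> borel_measurable M" "g \<in> borel_measurable M"
  shows "(\<integral>x. f x * g x \<partial>M)\<^sup>2 \<le> (\<integral>x. (f x)\<^sup>2 \<partial>M) * (\<integral>x. (g x)\<^sup>2 \<partial>M)"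
proof -
  define A where "A = (\<integral>x. (f x)\<^sup>2 \<partial>M)"
  define B where "B = (\<integral>x. (g x)\<^sup>2 \<partial>M)"
  define C where "C = (\<integral>x. f x * g x \<partial>M)"
  have fg: "integrable M (\<lambda>x. f x * g x)"
    by (rule integrable_mult_of_square_integrable) fact+
  show ?thesis
  proof (cases "A = 0")
    case True
    then have "AE x in M. (f x)\<^sup>2 = 0"
      using integral_nonneg_eq_0_iff_AE[OF f2] by (simp add: A_def)
    then have "AE x in M. f x * g x = 0" by eventually_elim simp
    then have "C = 0" unfolding C_def by (simp add: integral_eq_zero_AE)
    then show ?thesis by (simp add: A_def B_def C_def True)
  next
    case False
    then have A0: "A > 0" unfolding A_def by (simp add: order_le_neq_trans)
    have "0 \<le> (\<integral>x. (C * f x - A * g x)\<^sup>2 \<partial>M)" by simp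
    also have "\<dots> = C\<^sup>2 * A - 2 * C * A * C + A\<^sup>2 * B"
    proof -
      have "(\<lambda>x. (C * f x - A * g x)\<^sup>2) = (\<lambda>x. C\<^sup>2 * (f x)\<^sup>2 - (2 * C * A) * (f x * g x) + A\<^sup>2 * (g x)\<^sup>2)"
        by (auto simp: power2_eq_square algebra_simps)
      then show ?thesis using f2 g2 fg by (simp add: A_def B_def C_def)
    qed
    finally have "0 \<le> A * (A * B - C\<^sup>2)" by (simp add: power2_eq_square algebra_simps)
    then show ?thesis using A0 by (simp add: zero_le_mult_iff A_def B_def C_def)
  qed
qed

section \<open>Uncorrelated jointly Gaussian variables\<close>

lemma (in prob_space) centered_gaussian_rv:
  assumes G: "gaussian_rv M Z" and E: "expectation Z = 0"
  shows centered_gaussian_rv_integrable: "integrable M Z"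
    and centered_gaussian_rv_square_integrable: "integrable M (\<lambda>\<omega>. (Z \<omega>)\<^sup>2)"
    and centered_gaussian_rv_char:
      "(CLINT \<omega>|M. iexp (x * Z \<omega>)) = exp (- x\<^sup>2 * expectation (\<lambda>\<omega>. (Z \<omega>)\<^sup>2) / 2)"
proof -
  have [measurable]: "Z \<in> borel_measurable M" using G by (simp add: gaussian_rv_def)
  have "integrable M (\<lambda>\<omega>. (Z \<omega>)\<^sup>2) \<and>
      (CLINT \<omega>|M. iexp (x * Z \<omega>)) = exp (- x\<^sup>2 * expectation (\<lambda>\<omega>. (Z \<omega>)\<^sup>2) / 2)"
  proof (cases "\<exists>\<mu> \<sigma>. \<sigma> > 0 \<and> distributed M lborel Z (normal_density \<mu> \<sigma>)")
    case True
    then obtain m \<sigma> where \<sigma>: "\<sigma> > 0" and D: "distributed M lborel Z (normal_density m \<sigma>)" by blast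
    have m0: "m = 0" using normal_distributed_expectation[OF \<sigma> D] E by simp
    have "variance Z = \<sigma>\<^sup>2" using normal_distributed_variance[OF \<sigma> D] .
    then have second_moment: "expectation (\<lambda>\<omega>. (Z \<omega>)\<^sup>2) = \<sigma>\<^sup>2" using E by simp
    have "integrable lborel (\<lambda>x. normal_density m \<sigma> x * (x - m)\<^sup>2)"
      using integrable_normal_moment[OF \<sigma>] by blast
    then have Z2: "integrable M (\<lambda>\<omega>. (Z \<omega>)\<^sup>2)"
      using distributed_integrable[OF D, of "\<lambda>x. x\<^sup>2"] m0 by simp
    have W: "distributed M lborel (\<lambda>\<omega>. Z \<omega> / \<sigma>) std_normal_density"
      using normal_standard_normal_convert[OF \<sigma>] D m0 by simp
    have "(CLINT \<omega>|M. iexp (x * Z \<omega>)) = (CLINT \<omega>|M. iexp ((x * \<sigma>) * (Z \<omega> / \<sigma>)))"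
      using \<sigma> by simp
    also have "\<dots> = (CLINT y|distr M lborel (\<lambda>\<omega>. Z \<omega> / \<sigma>). iexp ((x * \<sigma>) * y))"
      by (subst integral_distr) (use W in \<open>auto simp: distributed_measurable\<close>)
    also have "\<dots> = char std_normal_distribution (x * \<sigma>)"
      unfolding char_def distributed_distr_eq_density[OF W] by simp
    also have "\<dots> = exp (- x\<^sup>2 * \<sigma>\<^sup>2 / 2)"
      by (simp add: char_std_normal_distribution power_mult_distrib)
    finally show ?thesis using Z2 second_moment by simp
  next
    case False
    then obtain c where c: "AE \<omega> in M. Z \<omega> = c" using G by (auto simp: gaussian_rv_def)
    then have "expectation Z = expectation (\<lambda>_. c)" by (intro integral_cong_AE) auto
    then have "expectation Z = c" by (simp add: prob_space)
    then have Z0: "AE \<omega> in M. Z \<omega> = 0" using c E by simp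
    then have Z2: "AE \<omega> in M. (Z \<omega>)\<^sup>2 = 0" by eventually_elim simp
    have "integrable M (\<lambda>\<omega>. (Z \<omega>)\<^sup>2)"
      by (rule integrable_cong_AE[THEN iffD2, of _ _ "\<lambda>_. 0"]) (use Z2 in auto)
    moreover have "expectation (\<lambda>\<omega>. (Z \<omega>)\<^sup>2) = 0"
      using integral_cong_AE[of "\<lambda>\<omega>. (Z \<omega>)\<^sup>2" M "\<lambda>_. 0"] Z2 by simp
    moreover have "(CLINT \<omega>|M. iexp (x * Z \<omega>)) = (CLINT \<omega>|M. 1)"
      using Z0 by (intro integral_cong_AE) auto
    ultimately show ?thesis by (simp add: prob_space)
  qed
  then show Z2: "integrable M (\<lambda>\<omega>. (Z \<omega>)\<^sup>2)"
    and "(CLINT \<omega>|M. iexp (x * Z \<omega>)) = exp (- x\<^sup>2 * expectation (\<lambda>\<omega>. (Z \<omega>)\<^sup>2) / 2)"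
    by auto
  show "integrable M Z" using square_integrable_imp_integrable[OF _ Z2] by simp
qed

lemma (in prob_space) integral_iexp_first_order_bound:
  assumes [measurable]: "U \<in> borel_measurable M" "Y \<in> borel_measurable M"
    and U2: "integrable M (\<lambda>\<omega>. (U \<omega>)\<^sup>2)" and Y1: "\<And>\<omega>. cmod (Y \<omega>) \<le> 1"
  shows "cmod ((CLINT \<omega>|M. (iexp (\<mu> * U \<omega>) - 1) * Y \<omega>) - \<i> * \<mu> * (CLINT \<omega>|M. U \<omega> * Y \<omega>))
           \<le> \<mu>\<^sup>2 * expectation (\<lambda>\<omega>. (U \<omega>)\<^sup>2) / 2"
proof -
  have iU: "integrable M U" using square_integrable_imp_integrable[OF _ U2] by simp
  have iUY: "integrable M (\<lambda>\<omega>. complex_of_real (U \<omega>) * Y \<omega>)"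
    by (rule Bochner_Integration.integrable_bound[OF iU]) (auto simp: norm_mult intro!: AE_I2 mult_left_le Y1)
  have "cmod ((iexp (\<mu> * U \<omega>) - 1) * Y \<omega>) \<le> 2 * 1" for \<omega>
    unfolding norm_mult
    by (rule mult_mono) (use norm_triangle_ineq4[of "iexp (\<mu> * U \<omega>)" 1] Y1 in auto)
  then have iY: "integrable M (\<lambda>\<omega>. (iexp (\<mu> * U \<omega>) - 1) * Y \<omega>)"
    by (intro integrable_const_bound[where B=2]) auto
  have "cmod (iexp x - (\<Sum>k\<le>Suc 0. (\<i> * x)^k / fact k)) \<le> \<bar>x\<bar>^Suc (Suc 0) / fact (Suc (Suc 0))"
    for x by (rule iexp_approx1)
  then have taylor: "cmod (iexp x - 1 - \<i> * x) \<le> x\<^sup>2 / 2" for x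
    by (simp add: power2_eq_square diff_diff_eq)
  have rem: "cmod ((iexp (\<mu> * U \<omega>) - 1 - \<i> * \<mu> * U \<omega>) * Y \<omega>) \<le> \<mu>\<^sup>2 / 2 * (U \<omega>)\<^sup>2" for \<omega>
  proof -
    have "cmod ((iexp (\<mu> * U \<omega>) - 1 - \<i> * \<mu> * U \<omega>) * Y \<omega>) \<le> (\<mu> * U \<omega>)\<^sup>2 / 2 * 1"
      unfolding norm_mult using taylor[of "\<mu> * U \<omega>"] Y1[of \<omega>]
      by (intro mult_mono) (auto simp: mult.assoc)
    then show ?thesis by (simp add: power_mult_distrib)
  qed
  have "(CLINT \<omega>|M. (iexp (\<mu> * U \<omega>) - 1) * Y \<omega>) - \<i> * \<mu> * (CLINT \<omega>|M. U \<omega> * Y \<omega>)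
      = (CLINT \<omega>|M. (iexp (\<mu> * U \<omega>) - 1) * Y \<omega> - \<i> * \<mu> * (U \<omega> * Y \<omega>))"
    using iY iUY by simp
  also have "\<dots> = (CLINT \<omega>|M. (iexp (\<mu> * U \<omega>) - 1 - \<i> * \<mu> * U \<omega>) * Y \<omega>)"
    by (rule Bochner_Integration.integral_cong) (auto simp: algebra_simps)
  also have "cmod \<dots> \<le> (\<integral>\<omega>. cmod ((iexp (\<mu> * U \<omega>) - 1 - \<i> * \<mu> * U \<omega>) * Y \<omega>) \<partial>M)"
    by (rule integral_norm_bound)
  also have "\<dots> \<le> (\<integral>\<omega>. \<mu>\<^sup>2 / 2 * (U \<omega>)\<^sup>2 \<partial>M)"
  proof (rule integral_mono[OF _ _ rem])
    show "integrable M (\<lambda>\<omega>. \<mu>\<^sup>2 / 2 * (U \<omega>)\<^sup>2)" using U2 by simp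
    then show "integrable M (\<lambda>\<omega>. cmod ((iexp (\<mu> * U \<omega>) - 1 - \<i> * \<mu> * U \<omega>) * Y \<omega>))"
      by (rule Bochner_Integration.integrable_bound) (use rem in auto)
  qed
  also have "\<dots> = \<mu>\<^sup>2 * expectation (\<lambda>\<omega>. (U \<omega>)\<^sup>2) / 2" by simp
  finally show ?thesis .
qed

definition jointly_gaussian :: "'a measure \<Rightarrow> ('a \<Rightarrow> real) \<Rightarrow> ('a \<Rightarrow> real) \<Rightarrow> bool" where
  "jointly_gaussian M U V \<longleftrightarrow> (\<forall>a b. gaussian_rv M (\<lambda>\<omega>. a * U \<omega> + b * V \<omega>))"

lemma jointly_gaussian_gaussian_rv:
  assumes "jointly_gaussian M U V"
  shows "gaussian_rv M U" and "gaussian_rv M V"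
  using assms[unfolded jointly_gaussian_def, rule_format, of 1 0]
    assms[unfolded jointly_gaussian_def, rule_format, of 0 1] by simp_all

lemma (in prob_space) jointly_gaussian_uncorrelated_char_sum:
  assumes J: "jointly_gaussian M U V" and EU: "expectation U = 0" and EV: "expectation V = 0"
    and EUV: "expectation (\<lambda>\<omega>. U \<omega> * V \<omega>) = 0"
  shows "(CLINT \<omega>|M. iexp (a * U \<omega> + b * V \<omega>))
           = exp (- (a\<^sup>2 * expectation (\<lambda>\<omega>. (U \<omega>)\<^sup>2) + b\<^sup>2 * expectation (\<lambda>\<omega>. (V \<omega>)\<^sup>2)) / 2)"
proof -
  note GU = jointly_gaussian_gaussian_rv(1)[OF J] and GV = jointly_gaussian_gaussian_rv(2)[OF J]
  have [measurable]: "U \<in> borel_measurable M" "V \<in> borel_measurable M"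
    using GU GV by (simp_all add: gaussian_rv_def)
  note U2 = centered_gaussian_rv_square_integrable[OF GU EU]
    and V2 = centered_gaussian_rv_square_integrable[OF GV EV]
  have "integrable M (\<lambda>\<omega>. U \<omega> * V \<omega>)"
    by (rule integrable_mult_of_square_integrable) (use U2 V2 in auto)
  moreover have "(\<lambda>\<omega>. (a * U \<omega> + b * V \<omega>)\<^sup>2)
      = (\<lambda>\<omega>. a\<^sup>2 * (U \<omega>)\<^sup>2 + (2 * a * b) * (U \<omega> * V \<omega>) + b\<^sup>2 * (V \<omega>)\<^sup>2)"
    by (auto simp: power2_eq_square algebra_simps)
  ultimately have "expectation (\<lambda>\<omega>. (a * U \<omega> + b * V \<omega>)\<^sup>2)
      = a\<^sup>2 * expectation (\<lambda>\<omega>. (U \<omega>)\<^sup>2) + b\<^sup>2 * expectation (\<lambda>\<omega>. (V \<omega>)\<^sup>2)"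
    using U2 V2 EUV by simp
  moreover have "expectation (\<lambda>\<omega>. a * U \<omega> + b * V \<omega>) = 0"
    using centered_gaussian_rv_integrable[OF GU EU] centered_gaussian_rv_integrable[OF GV EV] EU EV by simp
  ultimately show ?thesis
    using centered_gaussian_rv_char[OF J[unfolded jointly_gaussian_def, rule_format, of a b], of 1] by simp
qed

lemma abs_mult_sub_self_le:
  fixes p q s :: real
  assumes "0 < p" "p \<le> 1" "1 - s \<le> q" "q \<le> 1"
  shows "\<bar>p * q - p\<bar> \<le> s"
proof -
  have "\<bar>p * q - p\<bar> = p * (1 - q)" using assms by (simp add: abs_if algebra_simps mult_le_cancel_left1)
  also have "\<dots> \<le> 1 - q" using assms by (simp add: mult_left_le_one_le)
  finally show ?thesis using assms by simp
qed

lemma (in prob_space) jointly_gaussian_uncorrelated_char: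
  assumes J: "jointly_gaussian M U V" and EU: "expectation U = 0" and EV: "expectation V = 0"
    and EUV: "expectation (\<lambda>\<omega>. U \<omega> * V \<omega>) = 0"
  shows "(CLINT \<omega>|M. U \<omega> * iexp (t * V \<omega>)) = 0"
proof -
  note GU = jointly_gaussian_gaussian_rv(1)[OF J] and GV = jointly_gaussian_gaussian_rv(2)[OF J]
  have [measurable]: "U \<in> borel_measurable M" "V \<in> borel_measurable M"
    using GU GV by (simp_all add: gaussian_rv_def)
  define A where "A = expectation (\<lambda>\<omega>. (U \<omega>)\<^sup>2)"
  define B where "B = expectation (\<lambda>\<omega>. (V \<omega>)\<^sup>2)"
  have "A \<ge> 0" "B \<ge> 0" by (simp_all add: A_def B_def)
  note ch = jointly_gaussian_uncorrelated_char_sum[OF J EU EV EUV, folded A_def B_def]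
  define c where "c = (CLINT \<omega>|M. U \<omega> * iexp (t * V \<omega>))"
  \<comment> \<open>\<open>\<i> c\<close> is the derivative at \<open>\<mu> = 0\<close> of \<open>E[exp(\<i>\<mu>U + \<i>tV)] = exp(-(\<mu>\<^sup>2A + t\<^sup>2B)/2)\<close>, which vanishes\<close>
  have bound: "cmod c \<le> \<mu> * A" if "\<mu> > 0" for \<mu>
  proof -
    define D where "D = (CLINT \<omega>|M. (iexp (\<mu> * U \<omega>) - 1) * iexp (t * V \<omega>))"
    have "D = (CLINT \<omega>|M. iexp (\<mu> * U \<omega> + t * V \<omega>) - iexp (0 * U \<omega> + t * V \<omega>))"
      unfolding D_def by (rule Bochner_Integration.integral_cong) (auto simp: algebra_simps exp_add)
    also have "\<dots> = (CLINT \<omega>|M. iexp (\<mu> * U \<omega> + t * V \<omega>)) - (CLINT \<omega>|M. iexp (0 * U \<omega> + t * V \<omega>))"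
      by (rule Bochner_Integration.integral_diff) (auto intro!: integrable_const_bound[where B=1])
    also have "\<dots> = exp (- (\<mu>\<^sup>2 * A + t\<^sup>2 * B) / 2) - exp (- (t\<^sup>2 * B) / 2)"
      unfolding ch by simp
    also have "exp (- (\<mu>\<^sup>2 * A + t\<^sup>2 * B) / 2) = exp (- (t\<^sup>2 * B) / 2) * exp (- (\<mu>\<^sup>2 * A) / 2)"
      by (simp add: exp_add[symmetric] field_simps)
    finally have "cmod D = \<bar>exp (- (t\<^sup>2 * B) / 2) * exp (- (\<mu>\<^sup>2 * A) / 2) - exp (- (t\<^sup>2 * B) / 2)\<bar>"
      by (simp only: norm_of_real)
    also have "\<dots> \<le> \<mu>\<^sup>2 * A / 2"
    proof (rule abs_mult_sub_self_le)
      show "1 - \<mu>\<^sup>2 * A / 2 \<le> exp (- (\<mu>\<^sup>2 * A) / 2)"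
        using exp_ge_add_one_self[of "- (\<mu>\<^sup>2 * A) / 2"] by simp
      show "exp (- (\<mu>\<^sup>2 * A) / 2) \<le> 1" "exp (- (t\<^sup>2 * B) / 2) \<le> 1"
        using \<open>A \<ge> 0\<close> \<open>B \<ge> 0\<close> by simp_all
    qed simp
    finally have "cmod D \<le> \<mu>\<^sup>2 * A / 2" .
    moreover have "cmod (D - \<i> * \<mu> * c) \<le> \<mu>\<^sup>2 * A / 2"
      unfolding D_def c_def A_def
      by (rule integral_iexp_first_order_bound)
        (use centered_gaussian_rv_square_integrable[OF GU EU] in auto)
    moreover have "\<mu> * cmod c \<le> cmod D + cmod (D - \<i> * \<mu> * c)"
      using norm_triangle_ineq4[of D "D - \<i> * \<mu> * c"] \<open>\<mu> > 0\<close> by (simp add: norm_mult)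
    ultimately have "\<mu> * cmod c \<le> \<mu> * (\<mu> * A)" by (simp add: power2_eq_square)
    then show ?thesis using \<open>\<mu> > 0\<close> by simp
  qed
  have "cmod c \<le> 0 + e" if "e > 0" for e
  proof (cases "A = 0")
    case True
    then show ?thesis using bound[of 1] that by simp
  next
    case False
    then show ?thesis using bound[of "e / A"] that \<open>A \<ge> 0\<close> by simp
  qed
  then have "cmod c \<le> 0" by (rule field_le_epsilon)
  then show ?thesis unfolding c_def by simp
qed

lemma real_distribution_distr_density:
  fixes g :: "'a \<Rightarrow> real"
  assumes ig: "integrable M g" and g0: "\<And>x. 0 \<le> g x" and g1: "integral\<^sup>L M g = 1"
    and [measurable]: "V \<in> borel_measurable M"
  shows "real_distribution (distr (density M g) borel V)"
proof -
  have [measurable]: "g \<in> borel_measurable M" using ig by auto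
  have "emeasure (density M g) (space (density M g)) = (\<integral>\<^sup>+ x. ennreal (g x) * indicator (space M) x \<partial>M)"
    by (simp add: emeasure_density)
  also have "\<dots> = (\<integral>\<^sup>+ x. ennreal (g x) \<partial>M)"
    by (rule nn_integral_cong) simp
  also have "\<dots> = 1" using nn_integral_eq_integral[OF ig] g0 g1 by simp
  finally have "prob_space (density M g)" by (rule prob_spaceI)
  then show ?thesis
    by (auto simp: real_distribution_def real_distribution_axioms_def intro!: prob_space.prob_space_distr)
qed

lemma integral_mult_indicator_eq_if_char_eq:
  fixes P Q V :: "'a \<Rightarrow> real"
  assumes iP: "integrable M P" and iQ: "integrable M Q"
    and nonneg: "\<And>\<omega>. 0 \<le> P \<omega>" "\<And>\<omega>. 0 \<le> Q \<omega>"
    and [measurable]: "V \<in> borel_measurable M"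
    and char_eq: "\<And>t. (CLINT \<omega>|M. P \<omega> * iexp (t * V \<omega>)) = (CLINT \<omega>|M. Q \<omega> * iexp (t * V \<omega>))"
    and [measurable]: "B \<in> sets borel"
  shows "(\<integral>\<omega>. P \<omega> * indicator B (V \<omega>) \<partial>M) = (\<integral>\<omega>. Q \<omega> * indicator B (V \<omega>) \<partial>M)"
proof -
  have [measurable]: "P \<in> borel_measurable M" "Q \<in> borel_measurable M" using iP iQ by auto
  define m where "m = integral\<^sup>L M P"
  have "m = integral\<^sup>L M Q" using char_eq[of 0] by (simp add: m_def)
  show ?thesis
  proof (cases "m = 0")
    case True
    then have "AE \<omega> in M. P \<omega> = 0" "AE \<omega> in M. Q \<omega> = 0"
      using integral_nonneg_eq_0_iff_AE[OF iP] integral_nonneg_eq_0_iff_AE[OF iQ] nonneg \<open>m = integral\<^sup>L M Q\<close>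
      by (auto simp: m_def)
    then show ?thesis by (intro integral_cong_AE) auto
  next
    case False
    then have "m > 0" using nonneg by (simp add: m_def order_le_neq_trans)
    \<comment> \<open>\<open>P/m\<close> and \<open>Q/m\<close> are probability densities under which \<open>V\<close> has the same
      characteristic function\<close>
    define \<nu> where "\<nu> W = distr (density M (\<lambda>\<omega>. W \<omega> / m)) borel V" for W
    have dist: "real_distribution (\<nu> W)"
      if "integrable M W" "\<And>\<omega>. 0 \<le> W \<omega>" "integral\<^sup>L M W = m" for W
      unfolding \<nu>_def using that \<open>m > 0\<close> by (intro real_distribution_distr_density) auto
    have indicator: "(\<integral>x. (indicator B x :: real) \<partial>\<nu> W) = (\<integral>\<omega>. W \<omega> * indicator B (V \<omega>) \<partial>M) / m"
      if "W \<in> borel_measurable M" "\<And>\<omega>. 0 \<le> W \<omega>" for W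
      unfolding \<nu>_def using that \<open>m > 0\<close>
      by (subst integral_distr; (subst integral_density)?) simp_all
    have char: "char (\<nu> W) t = (CLINT \<omega>|M. W \<omega> * iexp (t * V \<omega>)) / m"
      if "W \<in> borel_measurable M" "\<And>\<omega>. 0 \<le> W \<omega>" for W t
      using that \<open>m > 0\<close> by (simp add: \<nu>_def char_def integral_distr integral_density scaleR_conv_of_real)
    have "char (\<nu> P) = char (\<nu> Q)"
    proof
      fix t
      show "char (\<nu> P) t = char (\<nu> Q) t"
        unfolding char[OF \<open>P \<in> borel_measurable M\<close> nonneg(1)] char[OF \<open>Q \<in> borel_measurable M\<close> nonneg(2)]
          char_eq ..
    qed
    moreover have "real_distribution (\<nu> P)" "real_distribution (\<nu> Q)"
      using dist[OF iP] dist[OF iQ] nonneg \<open>m = integral\<^sup>L M Q\<close> by (simp_all add: m_def)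
    ultimately have "\<nu> P = \<nu> Q" by (intro Levy_uniqueness)
    then have "(\<integral>x. (indicator B x :: real) \<partial>\<nu> P) = (\<integral>x. indicator B x \<partial>\<nu> Q)" by simp
    then have "(\<integral>\<omega>. P \<omega> * indicator B (V \<omega>) \<partial>M) / m = (\<integral>\<omega>. Q \<omega> * indicator B (V \<omega>) \<partial>M) / m"
      by (simp only: indicator[OF \<open>P \<in> borel_measurable M\<close> nonneg(1)]
          indicator[OF \<open>Q \<in> borel_measurable M\<close> nonneg(2)])
    then show ?thesis using \<open>m > 0\<close> by simp
  qed
qed

lemma integral_mult_indicator_eq_0_if_char_eq_0:
  fixes U V :: "'a \<Rightarrow> real"
  assumes iU: "integrable M U" and [measurable]: "V \<in> borel_measurable M"
    and char0: "\<And>t. (CLINT \<omega>|M. U \<omega> * iexp (t * V \<omega>)) = 0"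
    and [measurable]: "B \<in> sets borel"
  shows "(\<integral>\<omega>. U \<omega> * indicator B (V \<omega>) \<partial>M) = 0"
proof -
  define Up where "Up \<omega> = max (U \<omega>) 0" for \<omega>
  define Um where "Um \<omega> = max (- U \<omega>) 0" for \<omega>
  have U_eq: "U \<omega> = Up \<omega> - Um \<omega>" for \<omega> unfolding Up_def Um_def by auto
  have nonneg: "0 \<le> Up \<omega>" "0 \<le> Um \<omega>" for \<omega> unfolding Up_def Um_def by auto
  have iUp: "integrable M Up" and iUm: "integrable M Um" unfolding Up_def Um_def using iU by auto
  have integrable: "integrable M (\<lambda>\<omega>. W \<omega> * iexp (t * V \<omega>))" if "integrable M W" for W :: "'a \<Rightarrow> real" and t
    by (rule Bochner_Integration.integrable_bound[OF that])
      (use borel_measurable_integrable[OF that] in \<open>auto simp: norm_mult\<close>)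
  have "(CLINT \<omega>|M. Up \<omega> * iexp (t * V \<omega>)) = (CLINT \<omega>|M. Um \<omega> * iexp (t * V \<omega>))" for t
  proof -
    have "(CLINT \<omega>|M. Up \<omega> * iexp (t * V \<omega>)) - (CLINT \<omega>|M. Um \<omega> * iexp (t * V \<omega>))
        = (CLINT \<omega>|M. U \<omega> * iexp (t * V \<omega>))"
      using integrable[OF iUp] integrable[OF iUm]
      by (subst Bochner_Integration.integral_diff[symmetric]) (auto simp: U_eq left_diff_distrib)
    then show ?thesis using char0[of t] by simp
  qed
  then have "(\<integral>\<omega>. Up \<omega> * indicator B (V \<omega>) \<partial>M) = (\<integral>\<omega>. Um \<omega> * indicator B (V \<omega>) \<partial>M)"
    by (intro integral_mult_indicator_eq_if_char_eq[OF iUp iUm nonneg]) auto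
  moreover have "integrable M (\<lambda>\<omega>. Up \<omega> * indicator B (V \<omega>))" "integrable M (\<lambda>\<omega>. Um \<omega> * indicator B (V \<omega>))"
    using iUp iUm by (auto intro!: integrable_mult_bounded)
  ultimately show ?thesis by (simp add: U_eq left_diff_distrib)
qed

lemma jointly_gaussian_add_mult_right:
  assumes "jointly_gaussian M U V"
  shows "jointly_gaussian M (\<lambda>\<omega>. U \<omega> + c * V \<omega>) V"
  unfolding jointly_gaussian_def
proof (intro allI)
  fix a b
  have "gaussian_rv M (\<lambda>\<omega>. a * U \<omega> + (a * c + b) * V \<omega>)"
    using assms unfolding jointly_gaussian_def by blast
  then show "gaussian_rv M (\<lambda>\<omega>. a * (U \<omega> + c * V \<omega>) + b * V \<omega>)"
    by (simp add: algebra_simps)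
qed

lemma (in prob_space) jointly_gaussian_uncorrelated_indicator:
  assumes J: "jointly_gaussian M U V" and EU: "expectation U = 0" and EV: "expectation V = 0"
    and EUV: "expectation (\<lambda>\<omega>. U \<omega> * V \<omega>) = 0" and B: "B \<in> sets borel"
  shows "expectation (\<lambda>\<omega>. U \<omega> * indicator B (V \<omega>)) = 0"
proof (rule integral_mult_indicator_eq_0_if_char_eq_0[OF _ _ _ B])
  note GU = jointly_gaussian_gaussian_rv(1)[OF J] and GV = jointly_gaussian_gaussian_rv(2)[OF J]
  then show "integrable M U" "V \<in> borel_measurable M"
    using centered_gaussian_rv_integrable[OF GU EU] by (simp_all add: gaussian_rv_def)
  show "(CLINT \<omega>|M. U \<omega> * iexp (t * V \<omega>)) = 0" for t
    by (rule jointly_gaussian_uncorrelated_char[OF J EU EV EUV])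
qed

lemma gaussian_process_jointly_gaussian:
  assumes "gaussian_process M X" "0 \<le> p" "0 \<le> q"
  shows "jointly_gaussian M (X p) (X q)"
  unfolding jointly_gaussian_def
proof (intro allI)
  fix a b
  have comb: "gaussian_rv M (\<lambda>\<omega>. \<Sum>i\<in>I. c i * X i \<omega>)" if "finite I" "I \<subseteq> {0..}" for I c
    using assms(1) that unfolding gaussian_process_def by blast
  show "gaussian_rv M (\<lambda>\<omega>. a * X p \<omega> + b * X q \<omega>)"
  proof (cases "p = q")
    case True
    then show ?thesis using comb[of "{p}" "\<lambda>_. a + b"] assms by (simp add: algebra_simps)
  next
    case False
    then show ?thesis using comb[of "{p, q}" "\<lambda>i. if i = p then a else b"] assms by simp
  qed
qed

lemma (in prob_space) centered_gaussian_process_integrable_mult: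
  assumes GP: "gaussian_process M X" and CP: "centered_process M X" and "0 \<le> p" "0 \<le> q"
  shows "integrable M (\<lambda>\<omega>. X p \<omega> * X q \<omega>)"
proof -
  have square_integrable: "integrable M (\<lambda>\<omega>. (X r \<omega>)\<^sup>2)" if "0 \<le> r" for r
  proof (rule centered_gaussian_rv_square_integrable)
    show "gaussian_rv M (X r)"
      by (rule jointly_gaussian_gaussian_rv(1)[OF gaussian_process_jointly_gaussian[OF GP that that]])
    show "expectation (X r) = 0" using CP that by (simp add: centered_process_def)
  qed
  show ?thesis
    using assms GP by (intro integrable_mult_of_square_integrable square_integrable) (auto simp: gaussian_process_def)
qed

section \<open>Conditioning on the natural filtration\<close>

lemma space_gen_sigma: "space (gen_sigma M X I) = space M"
  unfolding gen_sigma_def by (rule space_measure_of) auto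

lemma sets_gen_sigma:
  "sets (gen_sigma M X I) = sigma_sets (space M) {X u -` B \<inter> space M | u B. u \<in> I \<and> B \<in> sets borel}"
  unfolding gen_sigma_def by (rule sets_measure_of) auto

lemma measurable_gen_sigma: "u \<in> I \<Longrightarrow> X u \<in> borel_measurable (gen_sigma M X I)"
  by (rule measurableI) (auto simp: space_gen_sigma sets_gen_sigma)

lemma sets_gen_sigma_singleton: "sets (gen_sigma M X {u}) = {X u -` B \<inter> space M | B. B \<in> sets borel}"
proof -
  have "gen_sigma M X {u} = vimage_algebra (space M) (X u) borel"
    unfolding gen_sigma_def vimage_algebra_def by (rule arg_cong[where f="sigma (space M)"]) auto
  then show ?thesis by (simp add: sets_vimage_algebra2)
qed

context prob_space
begin

context
  fixes X :: "real \<Rightarrow> 'a \<Rightarrow> real"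
  assumes X_measurable: "\<And>t. 0 \<le> t \<Longrightarrow> X t \<in> borel_measurable M"
begin

lemma sigma_finite_subalgebra_gen_sigma:
  assumes "I \<subseteq> {0..}"
  shows "sigma_finite_subalgebra M (gen_sigma M X I)"
proof -
  have "{X u -` B \<inter> space M | u B. u \<in> I \<and> B \<in> sets borel} \<subseteq> sets M"
    using assms X_measurable by (auto simp: measurable_def)
  then have "subalgebra M (gen_sigma M X I)"
    unfolding subalgebra_def space_gen_sigma sets_gen_sigma by (simp add: sets.sigma_sets_subset)
  then have "finite_measure_subalgebra M (gen_sigma M X I)" by unfold_locales
  then show ?thesis by (rule finite_measure_subalgebra_is_sigma_finite)
qed

lemma real_cond_exp_gen_sigma_singleton:
  assumes "0 \<le> u" and iY: "integrable M Y" and iW: "integrable M W"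
    and W_measurable: "W \<in> borel_measurable (gen_sigma M X {u})"
    and eq: "\<And>C. C \<in> sets borel \<Longrightarrow>
      (\<integral>\<omega>. Y \<omega> * indicator C (X u \<omega>) \<partial>M) = (\<integral>\<omega>. W \<omega> * indicator C (X u \<omega>) \<partial>M)"
  shows "AE \<omega> in M. real_cond_exp M (gen_sigma M X {u}) Y \<omega> = W \<omega>"
proof -
  interpret sigma_finite_subalgebra M "gen_sigma M X {u}"
    using \<open>0 \<le> u\<close> by (intro sigma_finite_subalgebra_gen_sigma) auto
  show ?thesis
  proof (rule real_cond_exp_charact[OF _ _ _ W_measurable])
    fix A assume "A \<in> sets (gen_sigma M X {u})"
    then obtain C where C: "C \<in> sets borel" and A: "A = X u -` C \<inter> space M"
      unfolding sets_gen_sigma_singleton by blast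
    have "(\<integral>\<omega>\<in>A. Y \<omega> \<partial>M) = (\<integral>\<omega>. Y \<omega> * indicator C (X u \<omega>) \<partial>M)"
      unfolding set_lebesgue_integral_def A
      by (rule Bochner_Integration.integral_cong) (auto simp: indicator_def)
    also have "\<dots> = (\<integral>\<omega>. W \<omega> * indicator C (X u \<omega>) \<partial>M)" by (rule eq[OF C])
    also have "\<dots> = (\<integral>\<omega>\<in>A. W \<omega> \<partial>M)"
      unfolding set_lebesgue_integral_def A
      by (rule Bochner_Integration.integral_cong) (auto simp: indicator_def)
    finally show "(\<integral>\<omega>\<in>A. Y \<omega> \<partial>M) = (\<integral>\<omega>\<in>A. W \<omega> \<partial>M)" .
  qed (fact iY iW)+
qed

lemma markov_process_integral_indicator:
  assumes MK: "markov_process M X" and "0 \<le> u" "u \<le> t"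
    and iY: "integrable M Y" and Y_measurable: "Y \<in> borel_measurable (gen_sigma M X {0..u})"
    and [measurable]: "C \<in> sets borel"
  shows "(\<integral>\<omega>. Y \<omega> * indicator {\<omega>\<in>space M. X t \<omega> \<in> C} \<omega> \<partial>M)
       = (\<integral>\<omega>. real_cond_exp M (gen_sigma M X {u}) Y \<omega> * indicator {\<omega>\<in>space M. X t \<omega> \<in> C} \<omega> \<partial>M)"
proof -
  interpret F: sigma_finite_subalgebra M "gen_sigma M X {0..u}"
    by (rule sigma_finite_subalgebra_gen_sigma) auto
  interpret G: sigma_finite_subalgebra M "gen_sigma M X {u}"
    using \<open>0 \<le> u\<close> by (intro sigma_finite_subalgebra_gen_sigma) auto
  have [measurable]: "X t \<in> borel_measurable M" using assms by (intro X_measurable) auto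
  have [measurable]: "Y \<in> borel_measurable M" using iY by auto
  define A where "A = {\<omega>\<in>space M. X t \<omega> \<in> C}"
  define \<phi> where "\<phi> = real_cond_exp M (gen_sigma M X {u}) (indicator A)"
  define Y' where "Y' = real_cond_exp M (gen_sigma M X {u}) Y"
  have [measurable]: "\<phi> \<in> borel_measurable M" "\<phi> \<in> borel_measurable (gen_sigma M X {u})"
    "Y' \<in> borel_measurable M" "Y' \<in> borel_measurable (gen_sigma M X {u})"
    unfolding \<phi>_def Y'_def by simp_all
  have iA: "integrable M (indicator A :: 'a \<Rightarrow> real)"
    by (rule integrable_const_bound[where B=1]) (auto simp: A_def)
  have "AE \<omega> in M. 0 \<le> \<phi> \<omega>"
    unfolding \<phi>_def by (rule G.real_cond_exp_ge_c[OF iA]) auto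
  moreover have "AE \<omega> in M. \<phi> \<omega> \<le> 1"
    unfolding \<phi>_def by (rule G.real_cond_exp_le_c[OF iA]) (auto simp: indicator_def)
  ultimately have \<phi>_bounded: "AE \<omega> in M. \<bar>\<phi> \<omega>\<bar> \<le> 1" by eventually_elim auto
  have markov: "AE \<omega> in M. real_cond_exp M (gen_sigma M X {0..u}) (indicator A) \<omega> = \<phi> \<omega>"
    using MK \<open>0 \<le> u\<close> \<open>u \<le> t\<close> unfolding markov_process_def A_def \<phi>_def by simp
  have "(\<integral>\<omega>. Y \<omega> * indicator A \<omega> \<partial>M)
      = (\<integral>\<omega>. Y \<omega> * real_cond_exp M (gen_sigma M X {0..u}) (indicator A) \<omega> \<partial>M)"
    by (rule F.real_cond_exp_intg(2)[symmetric, OF integrable_mult_bounded[OF iY] Y_measurable])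
      (auto simp: A_def)
  also have "\<dots> = (\<integral>\<omega>. \<phi> \<omega> * Y \<omega> \<partial>M)"
    by (rule integral_cong_AE) (use markov in auto)
  also have "\<dots> = (\<integral>\<omega>. \<phi> \<omega> * Y' \<omega> \<partial>M)"
    unfolding Y'_def
    by (rule G.real_cond_exp_intg(2)[symmetric])
      (use integrable_mult_bounded[OF iY _ \<phi>_bounded] in \<open>auto simp: \<phi>_def mult.commute\<close>)
  also have "\<dots> = (\<integral>\<omega>. Y' \<omega> * indicator A \<omega> \<partial>M)"
    unfolding \<phi>_def mult.commute[of "real_cond_exp _ _ _ _"]
    by (rule G.real_cond_exp_intg(2))
      (use integrable_mult_bounded[OF G.real_cond_exp_int(1)[OF iY]] in \<open>auto simp: Y'_def A_def\<close>)
  finally show ?thesis unfolding A_def Y'_def .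
qed

lemma markov_process_expectation_mult_future:
  assumes MK: "markov_process M X" and "0 \<le> u" "u \<le> t"
    and iY: "integrable M Y" and Y_measurable: "Y \<in> borel_measurable (gen_sigma M X {0..u})"
    and [measurable]: "W \<in> borel_measurable M"
    and projection: "AE \<omega> in M. real_cond_exp M (gen_sigma M X {u}) Y \<omega> = W \<omega>"
    and iXY: "integrable M (\<lambda>\<omega>. X t \<omega> * Y \<omega>)" and iXW: "integrable M (\<lambda>\<omega>. X t \<omega> * W \<omega>)"
  shows "expectation (\<lambda>\<omega>. X t \<omega> * Y \<omega>) = expectation (\<lambda>\<omega>. X t \<omega> * W \<omega>)"
proof -
  interpret G: sigma_finite_subalgebra M "gen_sigma M X {t}"
    using assms by (intro sigma_finite_subalgebra_gen_sigma) auto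
  have [measurable]: "X t \<in> borel_measurable M" using assms by (intro X_measurable) auto
  have [measurable]: "Y \<in> borel_measurable M" using iY by auto
  interpret U: sigma_finite_subalgebra M "gen_sigma M X {u}"
    using assms by (intro sigma_finite_subalgebra_gen_sigma) auto
  have iW: "integrable M W"
    using integrable_cong_AE[THEN iffD1, OF _ _ projection] U.real_cond_exp_int(1)[OF iY] by simp
  have ind: "indicator C (X t \<omega>) = indicator {\<omega>\<in>space M. X t \<omega> \<in> C} \<omega>" if "\<omega> \<in> space M" for C \<omega>
    using that by (simp add: indicator_def)
  have orthogonal: "AE \<omega> in M. real_cond_exp M (gen_sigma M X {t}) (\<lambda>\<omega>. Y \<omega> - W \<omega>) \<omega> = 0"
  proof (rule real_cond_exp_gen_sigma_singleton)
    fix C :: "real set" assume C[measurable]: "C \<in> sets borel"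
    have "(\<integral>\<omega>. Y \<omega> * indicator C (X t \<omega>) \<partial>M)
        = (\<integral>\<omega>. real_cond_exp M (gen_sigma M X {u}) Y \<omega> * indicator C (X t \<omega>) \<partial>M)"
      using markov_process_integral_indicator[OF MK assms(2,3) iY Y_measurable C]
      by (simp add: ind cong: Bochner_Integration.integral_cong)
    also have "\<dots> = (\<integral>\<omega>. W \<omega> * indicator C (X t \<omega>) \<partial>M)"
      by (rule integral_cong_AE) (use projection in auto)
    finally show "(\<integral>\<omega>. (Y \<omega> - W \<omega>) * indicator C (X t \<omega>) \<partial>M) = (\<integral>\<omega>. 0 * indicator C (X t \<omega>) \<partial>M)"
      using iY iW by (simp add: left_diff_distrib integrable_mult_bounded)
  qed (use assms iY iW in auto)
  have "expectation (\<lambda>\<omega>. X t \<omega> * (Y \<omega> - W \<omega>))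
      = expectation (\<lambda>\<omega>. X t \<omega> * real_cond_exp M (gen_sigma M X {t}) (\<lambda>\<omega>. Y \<omega> - W \<omega>) \<omega>)"
    by (rule G.real_cond_exp_intg(2)[symmetric])
      (use iXY iXW measurable_gen_sigma[where u=t and I="{t}" and X=X and M=M] in \<open>auto simp: right_diff_distrib\<close>)
  also have "\<dots> = 0"
    using orthogonal by (intro integral_eq_zero_AE) (auto elim: eventually_mono)
  finally have "expectation (\<lambda>\<omega>. X t \<omega> * (Y \<omega> - W \<omega>)) = 0" .
  then show ?thesis using iXY iXW by (simp add: right_diff_distrib)
qed

end

end

lemma (in prob_space) centered_gaussian_process_regression:
  assumes GP: "gaussian_process M X" and CP: "centered_process M X" and "0 \<le> s" "0 \<le> u"
    and pos: "expectation (\<lambda>\<omega>. X u \<omega> * X u \<omega>) > 0"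
  defines "b \<equiv> expectation (\<lambda>\<omega>. X s \<omega> * X u \<omega>) / expectation (\<lambda>\<omega>. X u \<omega> * X u \<omega>)"
  shows "AE \<omega> in M. real_cond_exp M (gen_sigma M X {u}) (X s) \<omega> = b * X u \<omega>"
proof -
  have Xm: "\<And>r. 0 \<le> r \<Longrightarrow> X r \<in> borel_measurable M" using GP by (simp add: gaussian_process_def)
  have iX: "\<And>r. 0 \<le> r \<Longrightarrow> integrable M (X r)" and EX: "\<And>r. 0 \<le> r \<Longrightarrow> expectation (X r) = 0"
    using CP by (auto simp: centered_process_def)
  note [measurable] = Xm[OF \<open>0 \<le> s\<close>] Xm[OF \<open>0 \<le> u\<close>]
  define U where "U \<omega> = X s \<omega> - b * X u \<omega>" for \<omega>
  have EU: "expectation U = 0" unfolding U_def using iX EX \<open>0 \<le> s\<close> \<open>0 \<le> u\<close> by simp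
  have "(\<lambda>\<omega>. U \<omega> * X u \<omega>) = (\<lambda>\<omega>. X s \<omega> * X u \<omega> - b * (X u \<omega> * X u \<omega>))"
    unfolding U_def by (auto simp: algebra_simps)
  then have EUXu: "expectation (\<lambda>\<omega>. U \<omega> * X u \<omega>) = 0"
    using centered_gaussian_process_integrable_mult[OF GP CP] pos \<open>0 \<le> s\<close> \<open>0 \<le> u\<close>
    by (simp add: b_def)
  have J: "jointly_gaussian M U (X u)"
    using jointly_gaussian_add_mult_right[OF gaussian_process_jointly_gaussian[OF GP assms(3,4)], of "- b"]
    by (simp add: U_def[abs_def])
  show ?thesis
  proof (rule real_cond_exp_gen_sigma_singleton[OF Xm \<open>0 \<le> u\<close> iX[OF \<open>0 \<le> s\<close>]])
    show "integrable M (\<lambda>\<omega>. b * X u \<omega>)" using iX \<open>0 \<le> u\<close> by simp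
    show "(\<lambda>\<omega>. b * X u \<omega>) \<in> borel_measurable (gen_sigma M X {u})"
      using measurable_gen_sigma[where u=u and I="{u}" and M=M and X=X] by simp
    fix C :: "real set" assume C: "C \<in> sets borel"
    have "(\<integral>\<omega>. X s \<omega> * indicator C (X u \<omega>) \<partial>M) - (\<integral>\<omega>. b * X u \<omega> * indicator C (X u \<omega>) \<partial>M)
        = expectation (\<lambda>\<omega>. U \<omega> * indicator C (X u \<omega>))"
      using C iX \<open>0 \<le> s\<close> \<open>0 \<le> u\<close> unfolding U_def left_diff_distrib
      by (subst Bochner_Integration.integral_diff) (auto intro: integrable_mult_bounded)
    also have "\<dots> = 0"
      by (rule jointly_gaussian_uncorrelated_indicator[OF J EU EX[OF \<open>0 \<le> u\<close>] EUXu C])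
    finally show "(\<integral>\<omega>. X s \<omega> * indicator C (X u \<omega>) \<partial>M) = (\<integral>\<omega>. b * X u \<omega> * indicator C (X u \<omega>) \<partial>M)"
      by simp
  qed
qed

lemma (in prob_space) markov_gaussian_covariance_factorization:
  assumes GP: "gaussian_process M X" and CP: "centered_process M X" and MK: "markov_process M X"
    and "0 \<le> s" "s \<le> u" "u \<le> t"
  shows "expectation (\<lambda>\<omega>. X s \<omega> * X t \<omega>) * expectation (\<lambda>\<omega>. X u \<omega> * X u \<omega>)
       = expectation (\<lambda>\<omega>. X s \<omega> * X u \<omega>) * expectation (\<lambda>\<omega>. X u \<omega> * X t \<omega>)"
proof -
  have Xm: "\<And>r. 0 \<le> r \<Longrightarrow> X r \<in> borel_measurable M" using GP by (simp add: gaussian_process_def)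
  have iX: "integrable M (X s)" using CP assms by (simp add: centered_process_def)
  have times: "0 \<le> s" "0 \<le> u" "0 \<le> t" using assms by auto
  note [measurable] = Xm[OF times(1)] Xm[OF times(2)] Xm[OF times(3)]
  note iXX = centered_gaussian_process_integrable_mult[OF GP CP]
  have "expectation (\<lambda>\<omega>. X u \<omega> * X u \<omega>) \<ge> 0" by simp
  then consider "expectation (\<lambda>\<omega>. X u \<omega> * X u \<omega>) = 0" | "expectation (\<lambda>\<omega>. X u \<omega> * X u \<omega>) > 0"
    by linarith
  then show ?thesis
  proof cases
    case 1
    then have "AE \<omega> in M. X u \<omega> * X u \<omega> = 0"
      using integral_nonneg_eq_0_iff_AE[OF iXX[OF times(2) times(2)]] by simp
    then have "AE \<omega> in M. X s \<omega> * X u \<omega> = 0" by eventually_elim simp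
    then have "expectation (\<lambda>\<omega>. X s \<omega> * X u \<omega>) = 0" by (simp add: integral_eq_zero_AE)
    with 1 show ?thesis by simp
  next
    case 2
    define b where "b = expectation (\<lambda>\<omega>. X s \<omega> * X u \<omega>) / expectation (\<lambda>\<omega>. X u \<omega> * X u \<omega>)"
    have "expectation (\<lambda>\<omega>. X t \<omega> * X s \<omega>) = expectation (\<lambda>\<omega>. X t \<omega> * (b * X u \<omega>))"
    proof (rule markov_process_expectation_mult_future[OF Xm MK times(2) \<open>u \<le> t\<close> iX])
      show "X s \<in> borel_measurable (gen_sigma M X {0..u})"
        using times \<open>s \<le> u\<close> by (intro measurable_gen_sigma) auto
      show "AE \<omega> in M. real_cond_exp M (gen_sigma M X {u}) (X s) \<omega> = b * X u \<omega>"
        unfolding b_def by (rule centered_gaussian_process_regression[OF GP CP times(1,2) 2])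
      show "integrable M (\<lambda>\<omega>. X t \<omega> * X s \<omega>)" by (rule iXX[OF times(3) times(1)])
      show "integrable M (\<lambda>\<omega>. X t \<omega> * (b * X u \<omega>))"
        using integrable_mult_right[OF iXX[OF times(3) times(2)], of b] by (simp add: mult.left_commute)
    qed simp_all
    moreover have "(\<lambda>\<omega>. X t \<omega> * X s \<omega>) = (\<lambda>\<omega>. X s \<omega> * X t \<omega>)"
      "(\<lambda>\<omega>. X t \<omega> * (b * X u \<omega>)) = (\<lambda>\<omega>. b * (X u \<omega> * X t \<omega>))"
      by (auto simp: mult_ac)
    ultimately have "expectation (\<lambda>\<omega>. X s \<omega> * X t \<omega>) = b * expectation (\<lambda>\<omega>. X u \<omega> * X t \<omega>)"
      by simp
    then show ?thesis using 2 by (simp add: b_def)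
  qed
qed

lemma (in prob_space) centered_gaussian_process_covariance_square_le:
  assumes GP: "gaussian_process M X" and CP: "centered_process M X" and "0 \<le> s" "0 \<le> t"
  shows "(expectation (\<lambda>\<omega>. X s \<omega> * X t \<omega>))\<^sup>2
           \<le> expectation (\<lambda>\<omega>. X s \<omega> * X s \<omega>) * expectation (\<lambda>\<omega>. X t \<omega> * X t \<omega>)"
proof -
  have square_integrable: "integrable M (\<lambda>\<omega>. (X r \<omega>)\<^sup>2)" if "0 \<le> r" for r
    using centered_gaussian_process_integrable_mult[OF GP CP that that] by (simp add: power2_eq_square)
  have measurable: "X r \<in> borel_measurable M" if "0 \<le> r" for r
    using GP that by (simp add: gaussian_process_def)
  show ?thesis
    using Cauchy_Schwarz_integral[OF square_integrable[OF \<open>0 \<le> s\<close>] square_integrable[OF \<open>0 \<le> t\<close>]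
        measurable[OF \<open>0 \<le> s\<close>] measurable[OF \<open>0 \<le> t\<close>]]
    by (simp add: power2_eq_square)
qed

section \<open>Multiplicative functions bounded by a power\<close>

lemma additive_bounded_above_eq_0:
  fixes h :: "real \<Rightarrow> real"
  assumes add: "\<And>a b. 0 \<le> a \<Longrightarrow> 0 \<le> b \<Longrightarrow> h (a + b) = h a + h b"
    and h1: "h 1 = 0"
    and bounded: "\<And>z. 0 \<le> z \<Longrightarrow> z \<le> 1 \<Longrightarrow> h z \<le> K"
    and "0 \<le> y"
  shows "h y = 0"
proof -
  have h_mult: "h (of_nat n * z) = of_nat n * h z" if "0 \<le> z" for n z
  proof (induction n)
    case 0
    show ?case using add[of 0 0] by simp
  next
    case (Suc n)
    have "h (of_nat (Suc n) * z) = h (of_nat n * z + z)" by (simp add: algebra_simps)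
    also have "\<dots> = h (of_nat n * z) + h z" by (rule add) (use that in auto)
    finally show ?case using Suc by (simp add: algebra_simps)
  qed
  have h_nat: "h (of_nat n) = 0" for n using h_mult[of 1 n] h1 by simp
  have not_pos: "\<not> h w > 0" if "0 \<le> w" for w
  proof
    assume "h w > 0"
    then obtain n :: nat where n: "of_nat n * h w > K" using reals_Archimedean3 by blast
    define k where "k = nat \<lfloor>of_nat n * w\<rfloor>"
    define z where "z = of_nat n * w - of_nat k"
    have "real k = of_int \<lfloor>of_nat n * w\<rfloor>" using \<open>0 \<le> w\<close> by (simp add: k_def)
    then have "0 \<le> z" "z \<le> 1" unfolding z_def by linarith+
    have "of_nat n * h w = h (z + of_nat k)" using h_mult[OF \<open>0 \<le> w\<close>] by (simp add: z_def)
    also have "\<dots> = h z" using add[OF \<open>0 \<le> z\<close>, of "of_nat k"] h_nat by simp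
    finally show False using bounded[OF \<open>0 \<le> z\<close> \<open>z \<le> 1\<close>] n by simp
  qed
  have "\<not> h y < 0"
  proof
    assume "h y < 0"
    define k where "k = nat \<lceil>y\<rceil>"
    have "y \<le> of_nat k" unfolding k_def by linarith
    then have "0 = h ((of_nat k - y) + y)" using h_nat by simp
    also have "\<dots> = h (of_nat k - y) + h y" using \<open>y \<le> of_nat k\<close> \<open>0 \<le> y\<close> by (intro add) auto
    finally show False using not_pos[of "of_nat k - y"] \<open>h y < 0\<close> \<open>y \<le> of_nat k\<close> by simp
  qed
  then show ?thesis using not_pos[OF \<open>0 \<le> y\<close>] by simp
qed

lemma multiplicative_ge_one_pos:
  fixes f :: "real \<Rightarrow> real"
  assumes mult: "\<And>a b. 1 \<le> a \<Longrightarrow> 1 \<le> b \<Longrightarrow> f (a * b) = f a * f b"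
    and nonzero: "\<exists>x>1. f x \<noteq> 0"
    and "1 \<le> x"
  shows "f x > 0"
proof -
  obtain x0 where "x0 > 1" "f x0 \<noteq> 0" using nonzero by blast
  have square: "f y = (f (sqrt y))\<^sup>2" if "1 \<le> y" for y
    using mult[of "sqrt y" "sqrt y"] that by (simp add: power2_eq_square)
  \<comment> \<open>a zero at \<open>x\<close> propagates down to the roots \<open>x powr (1 / 2 ^ n)\<close>, one of which lies
    below \<open>x0\<close>, and from there up to \<open>x0\<close>\<close>
  have "f x \<noteq> 0"
  proof
    assume "f x = 0"
    have root: "f (x powr (1 / 2 ^ n)) = 0" for n :: nat
    proof (induction n)
      case 0
      then show ?case using \<open>f x = 0\<close> \<open>1 \<le> x\<close> by simp
    next
      case (Suc n)
      have "sqrt (x powr (1 / 2 ^ n)) = x powr (1 / 2 ^ Suc n)"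
        using \<open>1 \<le> x\<close> by (simp add: sqrt_def root_powr_inverse powr_powr mult.commute)
      then show ?case
        using square[of "x powr (1 / 2 ^ n)"] Suc \<open>1 \<le> x\<close> by (simp add: ge_one_powr_ge_zero)
    qed
    obtain n :: nat where "ln x / ln x0 < 2 ^ n"
      using real_arch_pow[of 2 "ln x / ln x0"] by auto
    then have "ln x / 2 ^ n < ln x0" using \<open>x0 > 1\<close> by (simp add: field_simps)
    then have "exp (1 / 2 ^ n * ln x) < exp (ln x0)" by simp
    then have le: "x powr (1 / 2 ^ n) \<le> x0" using \<open>1 \<le> x\<close> \<open>x0 > 1\<close> by (simp add: powr_def)
    have "f x0 = f (x powr (1 / 2 ^ n) * (x0 / x powr (1 / 2 ^ n)))"
      using \<open>1 \<le> x\<close> by simp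
    also have "\<dots> = 0"
      using root[of n] le \<open>1 \<le> x\<close> by (subst mult) (auto simp: ge_one_powr_ge_zero)
    finally show False using \<open>f x0 \<noteq> 0\<close> by simp
  qed
  then show ?thesis using square[OF \<open>1 \<le> x\<close>] by simp
qed

lemma multiplicative_bounded_eq_powr:
  fixes f :: "real \<Rightarrow> real"
  assumes mult: "\<And>a b. 1 \<le> a \<Longrightarrow> 1 \<le> b \<Longrightarrow> f (a * b) = f a * f b"
    and bounded: "\<And>x. 1 \<le> x \<Longrightarrow> (f x)\<^sup>2 \<le> x powr (2 * H)"
    and nonzero: "\<exists>x>1. f x \<noteq> 0"
  shows "\<exists>d \<le> H. \<forall>x\<ge>1. f x = x powr d"
proof -
  have pos: "f x > 0" if "1 \<le> x" for x
    by (rule multiplicative_ge_one_pos[OF _ nonzero that]) (fact mult)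
  define g where "g y = ln (f (exp y))" for y
  have g_add: "g (a + b) = g a + g b" if "0 \<le> a" "0 \<le> b" for a b
    using mult[of "exp a" "exp b"] pos[of "exp a"] pos[of "exp b"] that
    by (simp add: g_def exp_add ln_mult)
  have g_le: "g y \<le> H * y" if "0 \<le> y" for y
  proof -
    have "f (exp y) > 0" using pos that by simp
    have "(f (exp y))\<^sup>2 \<le> exp (2 * H * y)" using bounded[of "exp y"] that by (simp add: powr_def)
    then have "ln ((f (exp y))\<^sup>2) \<le> ln (exp (2 * H * y))"
      using \<open>f (exp y) > 0\<close> by (subst ln_le_cancel_iff) auto
    then have "2 * ln (f (exp y)) \<le> 2 * H * y" using \<open>f (exp y) > 0\<close> by (simp add: ln_realpow)
    then show ?thesis by (simp add: g_def)
  qed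
  define d where "d = g 1"
  have g_linear: "g y = d * y" if "0 \<le> y" for y
  proof -
    have "g y - d * y = 0"
    proof (rule additive_bounded_above_eq_0[where h="\<lambda>y. g y - d * y" and K="\<bar>H\<bar> + \<bar>d\<bar>"])
      show "g (a + b) - d * (a + b) = (g a - d * a) + (g b - d * b)" if "0 \<le> a" "0 \<le> b" for a b
        using g_add[OF that] by (simp add: algebra_simps)
      show "g z - d * z \<le> \<bar>H\<bar> + \<bar>d\<bar>" if "0 \<le> z" "z \<le> 1" for z
      proof -
        have "\<bar>H * z\<bar> \<le> \<bar>H\<bar>" "\<bar>d * z\<bar> \<le> \<bar>d\<bar>"
          using that by (simp_all add: abs_mult mult_left_le)
        then show ?thesis using g_le[OF \<open>0 \<le> z\<close>] by linarith
      qed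
    qed (use that in \<open>simp_all add: d_def\<close>)
    then show ?thesis by simp
  qed
  show ?thesis
  proof (intro exI conjI allI impI)
    show "d \<le> H" using g_le[of 1] by (simp add: d_def)
    fix x :: real assume "1 \<le> x"
    then have "ln (f x) = d * ln x" using g_linear[of "ln x"] by (simp add: g_def)
    then have "f x = exp (d * ln x)" using pos[OF \<open>1 \<le> x\<close>] by (metis exp_ln)
    then show "f x = x powr d" using \<open>1 \<le> x\<close> by (simp add: powr_def mult.commute)
  qed
qed

section \<open>Self-similar covariance kernels\<close>

context
  fixes R :: "real \<Rightarrow> real \<Rightarrow> real" and K H :: real and l :: "real \<Rightarrow> real"
  assumes cov: "\<And>s t. 0 < s \<Longrightarrow> 0 < t \<Longrightarrow> R s t = K * min s t powr (2 * H) * l (\<bar>s - t\<bar> / min s t)"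
    and l0: "l 0 = 1"
begin

lemma self_similar_covariance_diagonal: "0 < x \<Longrightarrow> R x x = K * x powr (2 * H)"
  using cov[of x x] l0 by simp

lemma self_similar_covariance_scaled: "1 \<le> a \<Longrightarrow> 1 \<le> b \<Longrightarrow> R a (a * b) = K * a powr (2 * H) * l (b - 1)"
proof -
  assume "1 \<le> a" "1 \<le> b"
  then have "a \<le> a * b" "\<bar>a - a * b\<bar> / a = b - 1" by (simp_all add: field_simps)
  then show ?thesis using cov[of a "a * b"] \<open>1 \<le> a\<close> \<open>1 \<le> b\<close> by simp
qed

lemma self_similar_covariance_from_one: "1 \<le> x \<Longrightarrow> R 1 x = K * l (x - 1)"
  using self_similar_covariance_scaled[of 1 x] by simp

lemma self_similar_covariance_kernel_multiplicative:
  assumes "K \<noteq> 0"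
    and factorization: "\<And>s u t. 0 < s \<Longrightarrow> s \<le> u \<Longrightarrow> u \<le> t \<Longrightarrow> R s t * R u u = R s u * R u t"
    and "1 \<le> a" "1 \<le> b"
  shows "l (a * b - 1) = l (a - 1) * l (b - 1)"
proof -
  have "1 \<le> a * b" using mult_mono[of 1 a 1 b] assms by simp
  have "0 < a" using assms by simp
  have "R 1 (a * b) * R a a = R 1 a * R a (a * b)"
    using assms by (intro factorization) auto
  then have "K * l (a * b - 1) * (K * a powr (2 * H)) = K * l (a - 1) * (K * a powr (2 * H) * l (b - 1))"
    unfolding self_similar_covariance_from_one[OF \<open>1 \<le> a * b\<close>] self_similar_covariance_from_one[OF \<open>1 \<le> a\<close>]
      self_similar_covariance_scaled[OF \<open>1 \<le> a\<close> \<open>1 \<le> b\<close>] self_similar_covariance_diagonal[OF \<open>0 < a\<close>] .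
  then have "(K * K * a powr (2 * H)) * l (a * b - 1) = (K * K * a powr (2 * H)) * (l (a - 1) * l (b - 1))"
    by (simp only: mult_ac)
  then show ?thesis using \<open>K \<noteq> 0\<close> \<open>1 \<le> a\<close> by simp
qed

lemma self_similar_covariance_kernel_bound:
  assumes "K > 0" and Cauchy_Schwarz: "(R 1 x)\<^sup>2 \<le> R 1 1 * R x x" and "1 \<le> x"
  shows "(l (x - 1))\<^sup>2 \<le> x powr (2 * H)"
proof -
  have "K\<^sup>2 * (l (x - 1))\<^sup>2 \<le> K\<^sup>2 * x powr (2 * H)"
    using Cauchy_Schwarz \<open>1 \<le> x\<close> self_similar_covariance_from_one[of x]
      self_similar_covariance_diagonal[of 1] self_similar_covariance_diagonal[of x]
    by (simp add: power2_eq_square algebra_simps)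
  then show ?thesis using \<open>K > 0\<close> by simp
qed

end

theorem mainTheorem3:
  fixes M :: "'a measure" and X :: "real \<Rightarrow> 'a \<Rightarrow> real" and H :: real and l :: "real \<Rightarrow> real"
  assumes "prob_space M"
    and "H > 0"
    and "l 0 = 1"
    and "\<exists>x>0. l x \<noteq> 0"
    and "gaussian_process M X"
    and "centered_process M X"
    and "self_similar M H X"
    and "integral\<^sup>L M (\<lambda>\<omega>. X 1 \<omega> * X 1 \<omega>) > 0"
    and "\<forall>s>0. \<forall>t>0. integral\<^sup>L M (\<lambda>\<omega>. X s \<omega> * X t \<omega>)
           = integral\<^sup>L M (\<lambda>\<omega>. X 1 \<omega> * X 1 \<omega>) * (min s t) powr (2 * H) * l (\<bar>s - t\<bar> / min s t)"
    and "markov_process M X"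
  shows "\<exists>c::real. c \<le> - H \<and>
           (\<forall>\<alpha>::real. 0 < \<alpha> \<and> \<alpha> < 1 \<longrightarrow>
             (\<forall>t::real. t \<ge> 1 \<longrightarrow>
               l (t powr (1 - \<alpha>) - 1) = t powr (2 * H + c - \<alpha> * (2 * H + c))))"
proof -
  interpret prob_space M by fact
  define R where "R s t = expectation (\<lambda>\<omega>. X s \<omega> * X t \<omega>)" for s t
  note cov = assms(9)[rule_format, folded R_def] and l0 = \<open>l 0 = 1\<close> and K = assms(8)[folded R_def]
  have "\<exists>d \<le> H. \<forall>x\<ge>1. l (x - 1) = x powr d"
  proof (rule multiplicative_bounded_eq_powr)
    show "l (a * b - 1) = l (a - 1) * l (b - 1)" if "1 \<le> a" "1 \<le> b" for a b
      using self_similar_covariance_kernel_multiplicative[OF cov l0] K that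
        markov_gaussian_covariance_factorization[OF assms(5,6,10)] unfolding R_def by auto
    show "(l (x - 1))\<^sup>2 \<le> x powr (2 * H)" if "1 \<le> x" for x
    proof (rule self_similar_covariance_kernel_bound[OF cov l0 K _ that])
      show "(R 1 x)\<^sup>2 \<le> R 1 1 * R x x"
        unfolding R_def using that by (intro centered_gaussian_process_covariance_square_le[OF assms(5,6)]) auto
    qed auto
    from assms(4) obtain y where "y > 0" "l y \<noteq> 0" by blast
    then show "\<exists>x>1. l (x - 1) \<noteq> 0" by (intro exI[of _ "y + 1"]) auto
  qed
  then obtain d where "d \<le> H" and d: "\<And>x. 1 \<le> x \<Longrightarrow> l (x - 1) = x powr d" by blast
  show ?thesis
  proof (intro exI[of _ "d - 2 * H"] conjI allI impI)
    show "d - 2 * H \<le> - H" using \<open>d \<le> H\<close> by simp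
    fix \<alpha> t :: real assume "0 < \<alpha> \<and> \<alpha> < 1" "1 \<le> t"
    then have "l (t powr (1 - \<alpha>) - 1) = (t powr (1 - \<alpha>)) powr d" by (intro d) (simp add: ge_one_powr_ge_zero)
    also have "\<dots> = t powr (2 * H + (d - 2 * H) - \<alpha> * (2 * H + (d - 2 * H)))"
      using \<open>1 \<le> t\<close> by (simp add: powr_powr algebra_simps)
    finally show "l (t powr (1 - \<alpha>) - 1) = t powr (2 * H + (d - 2 * H) - \<alpha> * (2 * H + (d - 2 * H)))" .
  qed
qed

end
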